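(* Let $Q$ be a polynomial with complex coefficients. There exists a polynomial $P$ with complex coefficients such that $Q(x)=e^{V(x)}\frac{d}{dx}\big(e^{-V(x)}P(x)\big)$ if and only if $\int_{\Gamma_k}Q(z)e^{-V(z)}\,dz=0$ for all $k=1,\dots,D-1$. Moreover, such a $P$ (when it exists) is unique.
   Context: Let $V$ be a real polynomial of even degree $D\ge2$ with leading coefficient $\gamma>0$. Let $\omega=e^{2\pi i/D}$, $C_0=[0,+\infty)$ oriented away from $0$, and for $k=1,\dots,D-1$ let $C_k=\omega^k[0,+\infty)$ oriented towards $0$. Set $\Gamma_k=C_0\cup C_k$ ($k=1,\dots,D-1$) with these orientations, so that $\int_{\Gamma_k}f(z)\,dz=\int_0^\infty f(r)\,dr-\omega^k\int_0^\infty f(\omega^k r)\,dr$. *)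

theory Defs
  imports "HOL-Analysis.Analysis" "HOL-Computational_Algebra.Polynomial"
begin

definition omega :: "nat \<Rightarrow> complex" where
  "omega D = exp (2 * of_real pi * \<i> / of_nat D)"

text \<open>Integral over Gamma_k = C_0 \<union> C_k, C_0 = [0,\<infinity>) oriented away from 0,
  C_k = omega^k [0,\<infinity>) oriented towards 0:
  int_{Gamma_k} f = int_0^\<infinity> f(r) dr - omega^k int_0^\<infinity> f(omega^k r) dr.\<close>
definition Gamma_integral :: "nat \<Rightarrow> nat \<Rightarrow> (complex \<Rightarrow> complex) \<Rightarrow> complex" where
  "Gamma_integral D k f =
     integral {0..} (\<lambda>r::real. f (complex_of_real r))
     - omega D ^ k * integral {0..} (\<lambda>r::real. f (omega D ^ k * complex_of_real r))"

end

theory Submission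
  imports Defs "Jordan_Normal_Form.Determinant" "HOL-Real_Asymp.Real_Asymp"
begin

(* Put T P = P' - V' P, so that e^V (e^{-V} P)' = T P. Since e^{-V} decays like e^{-r^D} along
   every ray \<omega>^j [0,\<infinity>), each integral over \<Gamma>_k annihilates the image of T. Comparing leading
   coefficients, T raises degrees by exactly D - 1; hence T is injective and every Q splits as
   Q = T P + R with deg R < D - 1. It remains to show R = 0 when all integrals of R e^{-V} over
   \<Gamma>_1, ..., \<Gamma>_{D-1} vanish; as R ranges over a space of dimension D - 1, it suffices that these
   D - 1 functionals are linearly independent on all polynomials. A vanishing combination of them
   is a vanishing combination \<Sum> a_j J_j of the ray integrals J_j f = \<omega>^j \<integral> f(\<omega>^j r) dr. Truncating
   the Taylor series of e^{V - \<gamma> z^D} gives polynomials Q_N with Q_N e^{-V} \<rightarrow> z^p e^{-\<gamma> z^D}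
   dominatedly on every ray, and J_j (z^p e^{-\<gamma> z^D}) = \<omega>^{j(p+1)} c_p with c_p > 0. So
   \<Sum> a_j \<omega>^{j(p+1)} = 0 for all p, and inverting the discrete Fourier transform gives a = 0. *)

lemma matrix_kernel_trivial_if_transpose_kernel_trivial:
  fixes F :: "nat \<Rightarrow> nat \<Rightarrow> 'a::field"
  assumes transpose: "\<And>c. \<forall>i<n. (\<Sum>k<n. c k * F k i) = 0 \<Longrightarrow> \<forall>k<n. c k = 0"
      and x: "\<forall>k<n. (\<Sum>i<n. F k i * x i) = 0"
  shows "\<forall>i<n. x i = 0"
proof (rule ccontr)
  assume nz: "\<not> (\<forall>i<n. x i = 0)"
  define M where "M = mat n n (\<lambda>(k,i). F k i)"
  have M: "M \<in> carrier_mat n n" "transpose_mat M \<in> carrier_mat n n"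
    unfolding M_def by simp_all
  have "vec n x \<noteq> 0\<^sub>v n"
    using nz by (metis index_vec index_zero_vec(1))
  moreover have "M *\<^sub>v vec n x = 0\<^sub>v n"
    using x unfolding M_def by (intro eq_vecI) (simp_all add: scalar_prod_def atLeast0LessThan)
  ultimately have "Determinant.det M = 0"
    using det_0_iff_vec_prod_zero_field[OF M(1)] vec_carrier by blast
  then have "Determinant.det (transpose_mat M) = 0"
    using det_transpose[OF M(1)] by simp
  then obtain u where u: "u \<in> carrier_vec n" "u \<noteq> 0\<^sub>v n" "transpose_mat M *\<^sub>v u = 0\<^sub>v n"
    using det_0_iff_vec_prod_zero_field[OF M(2)] by blast
  have "\<forall>i<n. (\<Sum>k<n. vec_index u k * F k i) = 0"
  proof (intro allI impI)
    fix i assume i: "i < n"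
    have "vec_index (transpose_mat M *\<^sub>v u) i = (\<Sum>k<n. vec_index u k * F k i)"
      using i u(1) unfolding M_def by (simp add: scalar_prod_def atLeast0LessThan mult.commute)
    then show "(\<Sum>k<n. vec_index u k * F k i) = 0" using u(3) i by simp
  qed
  then have "u = 0\<^sub>v n"
    using transpose u(1) by (intro eq_vecI) auto
  with u(2) show False by simp
qed

lemma norm_poly_le_coeff_sum:
  fixes p :: "'a::real_normed_field poly"
  shows "norm (poly p z) \<le> (\<Sum>i\<le>degree p. norm (coeff p i)) * (1 + norm z) ^ degree p"
proof -
  have "norm (poly p z) \<le> (\<Sum>i\<le>degree p. norm (coeff p i * z ^ i))"
    unfolding poly_altdef by (rule norm_sum)
  also have "\<dots> \<le> (\<Sum>i\<le>degree p. norm (coeff p i) * (1 + norm z) ^ degree p)"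
  proof (intro sum_mono)
    fix i assume i: "i \<in> {..degree p}"
    have "norm z ^ i \<le> (1 + norm z) ^ i" by (intro power_mono) auto
    also have "\<dots> \<le> (1 + norm z) ^ degree p" using i by (intro power_increasing) auto
    finally show "norm (coeff p i * z ^ i) \<le> norm (coeff p i) * (1 + norm z) ^ degree p"
      by (simp add: norm_mult norm_power mult_left_mono)
  qed
  also have "\<dots> = (\<Sum>i\<le>degree p. norm (coeff p i)) * (1 + norm z) ^ degree p"
    by (simp add: sum_distrib_right)
  finally show ?thesis .
qed

lemma norm_exp_partial_sum_le:
  fixes x :: "'a::{real_normed_div_algebra,banach}"
  shows "norm (\<Sum>n<N. x ^ n /\<^sub>R fact n) \<le> exp (norm x)"
proof -
  have "norm (\<Sum>n<N. x ^ n /\<^sub>R fact n) \<le> (\<Sum>n<N. norm x ^ n /\<^sub>R fact n)"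
    by (rule order_trans[OF norm_sum]) (simp add: norm_power)
  also have "\<dots> \<le> (\<Sum>n. norm x ^ n /\<^sub>R fact n)"
    by (rule sum_le_suminf) (use exp_converges[of "norm x"] in \<open>auto simp: sums_iff\<close>)
  also have "\<dots> = exp (norm x)"
    using exp_converges[of "norm x"] by (simp add: sums_iff)
  finally show ?thesis .
qed

lemma power_exp_le_exp_minus_large:
  fixes n p :: nat and A g r :: real
  assumes n: "n \<ge> 1" and A: "A \<ge> 0" and r: "r \<ge> 1" and large: "A * 2 ^ n + p + 1 \<le> g * r"
  shows "(1 + r) ^ p * exp (A * (1 + r) ^ n - g * r ^ (n + 1)) \<le> exp (- r)"
proof -
  have "(1 + r) ^ p \<le> exp r ^ p"
    by (intro power_mono) (use r exp_ge_add_one_self in auto)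
  then have pow: "(1 + r) ^ p \<le> exp (p * r)"
    by (simp add: exp_of_nat_mult[symmetric])
  have "(1 + r) ^ n \<le> 2 ^ n * r ^ n"
    using power_mono[of "1 + r" "2 * r" n] r by (simp add: power_mult_distrib)
  then have "A * (1 + r) ^ n \<le> A * 2 ^ n * r ^ n"
    using A by (metis mult.assoc mult_left_mono)
  moreover have rn: "r \<le> r ^ n" using r n by (metis power_increasing power_one_right)
  moreover have "(A * 2 ^ n + p + 1) * r ^ n \<le> g * r ^ (n + 1)"
    using large r by (simp add: mult_right_mono)
  ultimately have "p * r + (A * (1 + r) ^ n - g * r ^ (n + 1)) \<le> - r"
    using mult_left_mono[OF rn, of p] by (simp add: algebra_simps)
  then have "exp (p * r) * exp (A * (1 + r) ^ n - g * r ^ (n + 1)) \<le> exp (- r)"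
    by (simp add: exp_add[symmetric])
  then show ?thesis
    using pow by (meson exp_ge_zero mult_right_mono order_trans)
qed

lemma power_exp_le_exp_minus:
  fixes n p :: nat and A g :: real
  assumes n: "n \<ge> 1" and g: "g > 0" and A: "A \<ge> 0"
  obtains C where "\<And>r. r \<ge> 0 \<Longrightarrow> (1 + r) ^ p * exp (A * (1 + r) ^ n - g * r ^ (n + 1)) \<le> C * exp (- r)"
proof
  define r0 where "r0 = max 1 ((A * 2 ^ n + p + 1) / g)"
  define C where "C = max 1 ((1 + r0) ^ p * exp (A * (1 + r0) ^ n) * exp r0)"
  fix r :: real assume r: "r \<ge> 0"
  show "(1 + r) ^ p * exp (A * (1 + r) ^ n - g * r ^ (n + 1)) \<le> C * exp (- r)"
  proof (cases "r \<ge> r0")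
    case True
    then have "r \<ge> 1" "A * 2 ^ n + p + 1 \<le> g * r"
      using g unfolding r0_def by (auto simp: field_simps)
    then have "(1 + r) ^ p * exp (A * (1 + r) ^ n - g * r ^ (n + 1)) \<le> exp (- r)"
      using power_exp_le_exp_minus_large n A by blast
    also have "\<dots> \<le> C * exp (- r)" unfolding C_def by simp
    finally show ?thesis .
  next
    case False
    have "A * (1 + r) ^ n \<le> A * (1 + r0) ^ n"
      using False r A by (intro mult_left_mono power_mono) auto
    moreover have "0 \<le> g * r ^ (n + 1)" using r g by simp
    ultimately have "exp (A * (1 + r) ^ n - g * r ^ (n + 1)) \<le> exp (A * (1 + r0) ^ n)"
      by simp
    moreover have "(1 + r) ^ p \<le> (1 + r0) ^ p"
      using False r by (intro power_mono) auto
    ultimately have "(1 + r) ^ p * exp (A * (1 + r) ^ n - g * r ^ (n + 1)) \<le> (1 + r0) ^ p * exp (A * (1 + r0) ^ n)"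
      using r by (intro mult_mono) (auto simp: r0_def)
    also have "\<dots> = (1 + r0) ^ p * exp (A * (1 + r0) ^ n) * exp r0 * exp (- r0)"
      by (simp add: exp_minus field_simps)
    also have "\<dots> \<le> C * exp (- r)"
      unfolding C_def using False by (intro mult_mono) auto
    finally show ?thesis .
  qed
qed

lemma integrable_exp_minus_atLeast_0: "(\<lambda>r::real. K * exp (- r)) integrable_on {0..}"
  using integrable_on_cmult_left[OF integrable_on_exp_minus_to_infinity[of 1 0], of K] by simp

lemma integrable_on_atLeast_0_if_exp_decay:
  fixes f :: "real \<Rightarrow> 'b::euclidean_space"
  assumes "continuous_on {0..} f" and "\<And>r. r \<ge> 0 \<Longrightarrow> norm (f r) \<le> K * exp (- r)"
  shows "f integrable_on {0..}"
proof (rule measurable_bounded_by_integrable_imp_integrable[where g = "\<lambda>r. K * exp (- r)"])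
  show "f \<in> borel_measurable (lebesgue_on {0..})"
    using assms(1) by (rule continuous_imp_measurable_on_sets_lebesgue) auto
qed (use assms(2) integrable_exp_minus_atLeast_0 in auto)

lemma has_integral_atLeast_0_derivative:
  fixes h h' :: "real \<Rightarrow> 'a::euclidean_space"
  assumes deriv: "\<And>r. (h has_vector_derivative h' r) (at r)"
      and decay: "\<And>r. r \<ge> 0 \<Longrightarrow> norm (h' r) \<le> K * exp (- r)"
      and vanish: "(h \<longlongrightarrow> 0) at_top"
  shows "(h' has_integral - h 0) {0..}"
proof (rule has_integral_dominated_convergence[where f = "\<lambda>k r. if r \<in> {0..real k} then h' r else 0"
      and y = "\<lambda>k. h (real k) - h 0" and h = "\<lambda>r. K * exp (- r)"])
  fix k :: nat
  have "(h' has_integral (h (real k) - h 0)) {0..real k}"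
    by (rule fundamental_theorem_of_calculus) (auto intro: has_vector_derivative_at_within deriv)
  then show "((\<lambda>r. if r \<in> {0..real k} then h' r else 0) has_integral (h (real k) - h 0)) {0..}"
    by (subst has_integral_restrict) auto
  show "\<forall>r\<in>{0..}. norm (if r \<in> {0..real k} then h' r else 0) \<le> K * exp (- r)"
    using decay by (auto intro: order_trans[OF norm_ge_zero])
next
  show "(\<lambda>r. K * exp (- r)) integrable_on {0..}"
    by (rule integrable_exp_minus_atLeast_0)
next
  show "\<forall>r\<in>{0..}. (\<lambda>k. if r \<in> {0..real k} then h' r else 0) \<longlonglongrightarrow> h' r"
  proof
    fix r :: real assume r: "r \<in> {0..}"
    have "eventually (\<lambda>k. real k \<ge> r) sequentially"
      by (meson eventually_sequentiallyI nat_ceiling_le_eq)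
    then have "eventually (\<lambda>k. (if r \<in> {0..real k} then h' r else 0) = h' r) sequentially"
      by eventually_elim (use r in auto)
    then show "(\<lambda>k. if r \<in> {0..real k} then h' r else 0) \<longlonglongrightarrow> h' r"
      by (rule tendsto_eventually)
  qed
next
  have "(\<lambda>k. h (real k)) \<longlonglongrightarrow> 0"
    using filterlim_compose[OF vanish filterlim_real_sequentially] .
  then show "(\<lambda>k. h (real k) - h 0) \<longlonglongrightarrow> - h 0"
    using tendsto_diff[OF _ tendsto_const, of _ 0 _ "h 0"] by simp
qed

lemma omega_pow_eq_1_iff:
  assumes "D > 0"
  shows "omega D ^ k = 1 \<longleftrightarrow> D dvd k"
proof
  assume "omega D ^ k = 1"
  then have "exp (of_nat k * (2 * of_real pi * \<i> / of_nat D)) = 1"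
    unfolding omega_def by (simp add: exp_of_nat_mult[symmetric])
  then obtain n :: int where "2 * pi * real k / real D = 2 * pi * real_of_int n"
    unfolding exp_eq_1 by (auto simp: mult_ac)
  then have "real_of_int (int k) = real_of_int (int D * n)"
    using assms by (simp add: field_simps)
  then have "int k = int D * n"
    by (simp only: of_int_eq_iff)
  then show "D dvd k"
    by (metis dvd_triv_left int_dvd_int_iff)
next
  assume "D dvd k"
  then obtain m where "k = D * m" by blast
  moreover have "omega D ^ D = 1"
    unfolding omega_def using assms by (simp add: exp_of_nat_mult[symmetric])
  ultimately show "omega D ^ k = 1" by (simp add: power_mult)
qed

lemma norm_omega [simp]: "norm (omega D) = 1"
  unfolding omega_def by (simp add: norm_exp_eq_Re)

lemma norm_omega_pow [simp]: "norm (omega D ^ k) = 1"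
  by (simp add: norm_power)

lemma sum_root_of_unity_powers:
  fixes u :: "'a::field"
  assumes primitive: "\<And>k. u ^ k = 1 \<longleftrightarrow> D dvd k"
  shows "(\<Sum>q<D. (u ^ k) ^ q) = (if D dvd k then of_nat D else 0)"
proof (cases "D dvd k")
  case True
  then have "u ^ k = 1" using primitive by simp
  with True show ?thesis by simp
next
  case False
  have "(u ^ k) ^ D = 1"
    using primitive by (simp add: power_mult[symmetric])
  then show ?thesis
    using False primitive geometric_sum[of "u ^ k" D] by simp
qed

lemma discrete_Fourier_injective:
  fixes a :: "nat \<Rightarrow> 'a::field_char_0"
  assumes primitive: "\<And>k. u ^ k = 1 \<longleftrightarrow> D dvd k"
      and zero: "\<And>p. (\<Sum>j<D. a j * u ^ (j * (p + 1))) = 0"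
      and l: "l < D"
  shows "a l = 0"
proof -
  have shift: "u ^ (m * (q + 1)) * u ^ (j * (q + 1)) = u ^ (j + m) * (u ^ (j + m)) ^ q"
    for m j q
  proof -
    have "m * (q + 1) + j * (q + 1) = (j + m) + (j + m) * q" by (simp add: algebra_simps)
    then show ?thesis by (metis power_add power_mult)
  qed
  have only_l: "D dvd j + (D - l) \<longleftrightarrow> j = l" if "j < D" for j
  proof
    assume "D dvd j + (D - l)"
    then obtain t where t: "j + (D - l) = D * t" by blast
    with that l have "0 < D * t" "D * t < D * 2" by linarith+
    then have "t = 1" by simp
    then show "j = l" using t l by simp
  qed (use l in simp)
  have "0 = (\<Sum>q<D. u ^ ((D - l) * (q + 1)) * (\<Sum>j<D. a j * u ^ (j * (q + 1))))"
    using zero by simp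
  also have "\<dots> = (\<Sum>j<D. a j * (u ^ (j + (D - l)) * (\<Sum>q<D. (u ^ (j + (D - l))) ^ q)))"
    unfolding sum_distrib_left shift[symmetric]
    by (subst sum.swap) (auto intro!: sum.cong simp: mult_ac)
  also have "\<dots> = (\<Sum>j<D. if j = l then a l * of_nat D else 0)"
    using l primitive only_l
    by (intro sum.cong refl) (auto simp: sum_root_of_unity_powers[OF primitive])
  also have "\<dots> = a l * of_nat D" using l by simp
  finally show ?thesis using l by simp
qed

locale potential =
  fixes V :: "real poly"
  assumes degree_ge_2: "degree V \<ge> 2" and lead_coeff_pos: "lead_coeff V > 0"
begin

abbreviation "D \<equiv> degree V"
abbreviation "\<gamma> \<equiv> lead_coeff V"
abbreviation "\<omega> \<equiv> omega D"
abbreviation "Vc \<equiv> map_poly complex_of_real V"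
abbreviation "damped Q \<equiv> \<lambda>z. poly Q z * exp (- poly Vc z)"

definition V_tail :: "complex poly" where
  "V_tail = Vc - monom (of_real \<gamma>) D"

definition tail_bound :: real where
  "tail_bound = (\<Sum>i\<le>degree V_tail. norm (coeff V_tail i))"

lemma tail_bound_nonneg: "tail_bound \<ge> 0"
  unfolding tail_bound_def by (simp add: sum_nonneg)

definition ray_integral :: "nat \<Rightarrow> (complex \<Rightarrow> complex) \<Rightarrow> complex" where
  "ray_integral j f = \<omega> ^ j * integral {0..} (\<lambda>r. f (\<omega> ^ j * of_real r))"

definition twisted_pderiv :: "complex poly \<Rightarrow> complex poly" where
  "twisted_pderiv P = pderiv P - pderiv Vc * P"

lemma D_pos: "D > 0"
  using degree_ge_2 by simp

lemma V_nonzero: "V \<noteq> 0"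
  using D_pos by auto

lemma omega_primitive: "\<omega> ^ k = 1 \<longleftrightarrow> D dvd k"
  using omega_pow_eq_1_iff[OF D_pos] .

lemma ray_pow_D: "(\<omega> ^ j * of_real r) ^ D = of_real (r ^ D)"
proof -
  have "(\<omega> ^ j * of_real r) ^ D = (\<omega> ^ D) ^ j * of_real r ^ D"
    by (simp add: power_mult_distrib power_mult[symmetric] mult.commute)
  moreover have "\<omega> ^ D = 1" using omega_primitive by simp
  ultimately show ?thesis by simp
qed

lemma poly_Vc: "poly Vc z = of_real \<gamma> * z ^ D + poly V_tail z"
  unfolding V_tail_def by (simp add: poly_monom)

lemma degree_V_tail: "degree V_tail \<le> D - 1"
proof (rule degree_le, intro allI impI)
  fix i assume "D - 1 < i"
  then have "i = D \<or> D < i" by auto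
  then show "coeff V_tail i = 0"
    unfolding V_tail_def by (auto simp: coeff_map_poly coeff_eq_0)
qed

lemma norm_V_tail_ray:
  assumes "r \<ge> 0"
  shows "norm (poly V_tail (\<omega> ^ j * of_real r)) \<le> tail_bound * (1 + r) ^ (D - 1)"
proof -
  have "norm (poly V_tail (\<omega> ^ j * of_real r)) \<le> tail_bound * (1 + r) ^ degree V_tail"
    using norm_poly_le_coeff_sum[of V_tail "\<omega> ^ j * of_real r"] assms
    unfolding tail_bound_def by (simp add: norm_mult)
  also have "\<dots> \<le> tail_bound * (1 + r) ^ (D - 1)"
    using assms degree_V_tail tail_bound_nonneg by (intro mult_left_mono power_increasing) auto
  finally show ?thesis .
qed

lemma norm_exp_minus_V_ray:
  assumes "r \<ge> 0"
  shows "norm (exp (- poly Vc (\<omega> ^ j * of_real r))) \<le> exp (tail_bound * (1 + r) ^ (D - 1) - \<gamma> * r ^ D)"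
proof -
  have "Re (- poly Vc (\<omega> ^ j * of_real r)) = - \<gamma> * r ^ D - Re (poly V_tail (\<omega> ^ j * of_real r))"
    unfolding poly_Vc ray_pow_D by simp
  also have "\<dots> \<le> tail_bound * (1 + r) ^ (D - 1) - \<gamma> * r ^ D"
    using norm_V_tail_ray[OF assms, of j] abs_Re_le_cmod[of "poly V_tail (\<omega> ^ j * of_real r)"]
    by linarith
  finally show ?thesis by (simp add: norm_exp_eq_Re)
qed

lemma power_exp_V_le_exp_minus:
  assumes "A \<ge> 0"
  obtains C where "\<And>r. r \<ge> 0 \<Longrightarrow> (1 + r) ^ p * exp (A * (1 + r) ^ (D - 1) - \<gamma> * r ^ D) \<le> C * exp (- r)"
proof -
  have "D - 1 \<ge> 1" "D - 1 + 1 = D" using degree_ge_2 by auto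
  with power_exp_le_exp_minus[OF this(1) lead_coeff_pos assms, of p] that show ?thesis by auto
qed

lemma damped_ray_decay:
  obtains K where "\<And>j r. r \<ge> 0 \<Longrightarrow> norm (damped Q (\<omega> ^ j * of_real r)) \<le> K * exp (- r)"
proof -
  define NQ where "NQ = (\<Sum>i\<le>degree Q. norm (coeff Q i))"
  have NQ: "NQ \<ge> 0" unfolding NQ_def by (simp add: sum_nonneg)
  obtain C where C: "\<And>r. r \<ge> 0 \<Longrightarrow>
      (1 + r) ^ degree Q * exp (tail_bound * (1 + r) ^ (D - 1) - \<gamma> * r ^ D) \<le> C * exp (- r)"
    using power_exp_V_le_exp_minus[OF tail_bound_nonneg] by blast
  have "norm (damped Q (\<omega> ^ j * of_real r)) \<le> NQ * C * exp (- r)" if r: "r \<ge> 0" for j r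
  proof -
    have "norm (poly Q (\<omega> ^ j * of_real r)) \<le> NQ * (1 + r) ^ degree Q"
      using norm_poly_le_coeff_sum[of Q "\<omega> ^ j * of_real r"] r
      unfolding NQ_def by (simp add: norm_mult)
    then have "norm (damped Q (\<omega> ^ j * of_real r))
        \<le> NQ * ((1 + r) ^ degree Q * exp (tail_bound * (1 + r) ^ (D - 1) - \<gamma> * r ^ D))"
      unfolding norm_mult mult.assoc[symmetric]
      by (intro mult_mono norm_exp_minus_V_ray r) (use r NQ in auto)
    also have "\<dots> \<le> NQ * (C * exp (- r))" using C[OF r] NQ by (intro mult_left_mono)
    finally show ?thesis by (simp add: mult.assoc)
  qed
  then show ?thesis using that by blast
qed

lemma damped_ray_integrable: "(\<lambda>r. damped Q (\<omega> ^ j * of_real r)) integrable_on {0..}"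
proof -
  obtain K where "\<And>j r. r \<ge> 0 \<Longrightarrow> norm (damped Q (\<omega> ^ j * of_real r)) \<le> K * exp (- r)"
    using damped_ray_decay by blast
  then show ?thesis
    by (intro integrable_on_atLeast_0_if_exp_decay continuous_intros) auto
qed

lemma ray_integral_damped_add:
  "ray_integral j (damped (P + R)) = ray_integral j (damped P) + ray_integral j (damped R)"
  unfolding ray_integral_def
  by (simp add: distrib_right distrib_left integral_add damped_ray_integrable)

lemma ray_integral_damped_expand:
  assumes "degree R < n"
  shows "ray_integral j (damped R) = (\<Sum>i<n. coeff R i * ray_integral j (damped (monom 1 i)))"
proof -
  have "poly R z = (\<Sum>i<n. coeff R i * poly (monom 1 i) z)" for z
    unfolding poly_altdef[of R] poly_monom mult_1_left using assms
    by (intro sum.mono_neutral_left) (auto simp: coeff_eq_0)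
  then have "ray_integral j (damped R) = \<omega> ^ j * integral {0..} (\<lambda>r.
      \<Sum>i<n. coeff R i * damped (monom 1 i) (\<omega> ^ j * of_real r))"
    unfolding ray_integral_def by (simp add: sum_distrib_right mult.assoc)
  also have "\<dots> = \<omega> ^ j * (\<Sum>i<n. integral {0..} (\<lambda>r. coeff R i * damped (monom 1 i) (\<omega> ^ j * of_real r)))"
    by (subst integral_sum) (auto intro!: integrable_on_mult_right damped_ray_integrable)
  also have "\<dots> = (\<Sum>i<n. coeff R i * ray_integral j (damped (monom 1 i)))"
    unfolding ray_integral_def by (simp add: integral_mult_right sum_distrib_left mult_ac)
  finally show ?thesis .
qed

lemma Gamma_integral_eq_ray_integrals:
  "Gamma_integral D k f = ray_integral 0 f - ray_integral k f"
  unfolding Gamma_integral_def ray_integral_def by simp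

lemma has_field_derivative_damped:
  "(damped P has_field_derivative damped (twisted_pderiv P) z) (at z)"
proof -
  have "(damped P has_field_derivative
      poly (pderiv P) z * exp (- poly Vc z) + poly P z * (exp (- poly Vc z) * - poly (pderiv Vc) z)) (at z)"
    by (auto intro!: derivative_eq_intros poly_DERIV)
  then show ?thesis unfolding twisted_pderiv_def by (simp add: algebra_simps)
qed

lemma twisted_pderiv_iff:
  "(\<forall>x. poly Q x = exp (poly Vc x) * deriv (\<lambda>z. exp (- poly Vc z) * poly P z) x)
    \<longleftrightarrow> Q = twisted_pderiv P"
proof -
  have "exp (poly Vc x) * deriv (\<lambda>z. exp (- poly Vc z) * poly P z) x = poly (twisted_pderiv P) x" for x
    using DERIV_imp_deriv[OF has_field_derivative_damped[of P x]]
    by (simp add: mult.commute exp_minus field_simps)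
  then have "(\<forall>x. poly Q x = exp (poly Vc x) * deriv (\<lambda>z. exp (- poly Vc z) * poly P z) x)
      \<longleftrightarrow> poly Q = poly (twisted_pderiv P)"
    by (simp add: fun_eq_iff)
  then show ?thesis by (simp add: poly_eq_poly_eq_iff)
qed

lemma ray_integral_damped_twisted_pderiv:
  "ray_integral j (damped (twisted_pderiv P)) = - damped P 0"
proof -
  define h where "h r = damped P (\<omega> ^ j * of_real r)" for r
  define h' where "h' r = \<omega> ^ j * damped (twisted_pderiv P) (\<omega> ^ j * of_real r)" for r
  obtain K where K: "\<And>j r. r \<ge> 0 \<Longrightarrow> norm (damped (twisted_pderiv P) (\<omega> ^ j * of_real r)) \<le> K * exp (- r)"
    using damped_ray_decay by blast
  obtain K' where K': "\<And>j r. r \<ge> 0 \<Longrightarrow> norm (damped P (\<omega> ^ j * of_real r)) \<le> K' * exp (- r)"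
    using damped_ray_decay by blast
  have "(h has_vector_derivative h' r) (at r)" for r
  proof -
    have "((\<lambda>r. \<omega> ^ j * of_real r) has_vector_derivative \<omega> ^ j) (at r)"
      by (auto intro!: derivative_eq_intros simp: has_vector_derivative_def scaleR_conv_of_real)
    from field_vector_diff_chain_at[OF this has_field_derivative_damped]
    show ?thesis unfolding h_def h'_def o_def by (simp add: mult.commute)
  qed
  moreover have "norm (h' r) \<le> K * exp (- r)" if "r \<ge> 0" for r
    using K[OF that] unfolding h'_def by (simp add: norm_mult)
  moreover have "(h \<longlongrightarrow> 0) at_top"
  proof (rule Lim_null_comparison)
    show "\<forall>\<^sub>F r in at_top. norm (h r) \<le> K' * exp (- r)"
      using eventually_ge_at_top[of 0] by eventually_elim (simp add: h_def K')
    show "((\<lambda>r. K' * exp (- r)) \<longlongrightarrow> 0) at_top" by real_asymp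
  qed
  ultimately have "integral {0..} h' = - h 0"
    by (intro integral_unique has_integral_atLeast_0_derivative)
  then show ?thesis
    unfolding ray_integral_def h_def h'_def by (simp add: integral_mult_right)
qed

lemma Gamma_integral_damped_twisted_pderiv: "Gamma_integral D k (damped (twisted_pderiv P)) = 0"
  unfolding Gamma_integral_eq_ray_integrals ray_integral_damped_twisted_pderiv by simp

lemma Gamma_integral_damped_add_twisted_pderiv:
  "Gamma_integral D k (damped (twisted_pderiv P + R)) = Gamma_integral D k (damped R)"
  using Gamma_integral_damped_twisted_pderiv[of k P]
  unfolding Gamma_integral_eq_ray_integrals ray_integral_damped_add by simp

lemma Gamma_integral_damped_expand:
  assumes "degree R < n"
  shows "Gamma_integral D k (damped R) = (\<Sum>i<n. coeff R i * Gamma_integral D k (damped (monom 1 i)))"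
  unfolding Gamma_integral_eq_ray_integrals ray_integral_damped_expand[OF assms]
  by (simp add: right_diff_distrib sum_subtractf)


lemma lead_coeff_pderiv_Vc: "coeff (pderiv Vc) (D - 1) = of_nat D * of_real \<gamma>"
proof -
  have "Suc (D - 1) = D" using D_pos by simp
  then show ?thesis by (simp add: coeff_pderiv coeff_map_poly)
qed

lemma degree_pderiv_Vc: "degree (pderiv Vc) = D - 1"
  by (simp add: degree_pderiv degree_map_poly)

lemma twisted_pderiv_top_coeff:
  assumes "P \<noteq> 0"
  shows "degree (twisted_pderiv P) = degree P + (D - 1)"
    and "coeff (twisted_pderiv P) (degree P + (D - 1)) = - (of_nat D * of_real \<gamma>) * lead_coeff P"
proof -
  define m where "m = degree P + (D - 1)"
  have "pderiv Vc \<noteq> 0"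
    using lead_coeff_pderiv_Vc D_pos lead_coeff_pos by (metis coeff_0 mult_eq_0_iff of_nat_eq_0_iff
        of_real_eq_0_iff less_irrefl neq0_conv)
  then have "degree (pderiv Vc * P) = m"
    using degree_mult_eq[of "pderiv Vc" P] assms unfolding m_def by (simp add: degree_pderiv_Vc)
  then have product: "degree (pderiv Vc * P) = m" "coeff (pderiv Vc * P) m = of_nat D * of_real \<gamma> * lead_coeff P"
    using lead_coeff_mult[of "pderiv Vc" P] lead_coeff_pderiv_Vc by (simp_all add: degree_pderiv_Vc)
  have "degree (pderiv P) < m"
    using degree_ge_2 unfolding m_def by (simp add: degree_pderiv)
  then have top: "coeff (twisted_pderiv P) m = - (of_nat D * of_real \<gamma>) * lead_coeff P"
    unfolding twisted_pderiv_def using product by (simp add: coeff_eq_0)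
  have "degree (twisted_pderiv P) \<le> m"
    unfolding twisted_pderiv_def using product \<open>degree (pderiv P) < m\<close>
    by (metis degree_diff_le less_imp_le order_refl)
  moreover have "m \<le> degree (twisted_pderiv P)"
    by (rule le_degree) (use top assms lead_coeff_pos D_pos V_nonzero in simp)
  ultimately show "degree (twisted_pderiv P) = degree P + (D - 1)" unfolding m_def by simp
  show "coeff (twisted_pderiv P) (degree P + (D - 1)) = - (of_nat D * of_real \<gamma>) * lead_coeff P"
    using top unfolding m_def .
qed

lemma twisted_pderiv_add: "twisted_pderiv (P + R) = twisted_pderiv P + twisted_pderiv R"
  unfolding twisted_pderiv_def by (simp add: pderiv_add algebra_simps)

lemma twisted_pderiv_diff: "twisted_pderiv (P - R) = twisted_pderiv P - twisted_pderiv R"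
  unfolding twisted_pderiv_def by (simp add: pderiv_diff algebra_simps)

lemma twisted_pderiv_inj:
  assumes "twisted_pderiv P1 = twisted_pderiv P2"
  shows "P1 = P2"
proof (rule ccontr)
  assume "P1 \<noteq> P2"
  then have nonzero: "P1 - P2 \<noteq> 0" by simp
  have "coeff (twisted_pderiv (P1 - P2)) (degree (P1 - P2) + (D - 1)) \<noteq> 0"
    unfolding twisted_pderiv_top_coeff(2)[OF nonzero]
    using leading_coeff_neq_0[OF nonzero] lead_coeff_pos D_pos V_nonzero by simp
  then show False
    using assms by (simp add: twisted_pderiv_diff)
qed

lemma twisted_pderiv_division: "\<exists>P R. Q = twisted_pderiv P + R \<and> degree R < D - 1"
proof (induction "degree Q" arbitrary: Q rule: less_induct)
  case less
  show ?case
  proof (cases "degree Q < D - 1")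
    case True
    then show ?thesis by (intro exI[of _ 0] exI[of _ Q]) (simp add: twisted_pderiv_def)
  next
    case False
    then have "Q \<noteq> 0" using degree_ge_2 by auto
    define P where "P = monom (- lead_coeff Q / (of_nat D * of_real \<gamma>)) (degree Q - (D - 1))"
    have "P \<noteq> 0" "degree P = degree Q - (D - 1)"
      unfolding P_def using \<open>Q \<noteq> 0\<close> lead_coeff_pos D_pos V_nonzero
      by (simp_all add: degree_monom_eq)
    then have top: "degree (twisted_pderiv P) = degree Q" "lead_coeff (twisted_pderiv P) = lead_coeff Q"
      using twisted_pderiv_top_coeff[OF \<open>P \<noteq> 0\<close>] False D_pos lead_coeff_pos
      by (auto simp: P_def)
    obtain P' R where "Q - twisted_pderiv P = twisted_pderiv P' + R" "degree R < D - 1"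
    proof (cases "Q - twisted_pderiv P = 0")
      case True
      then show ?thesis
        using that[of 0 0] degree_ge_2 by (simp add: twisted_pderiv_def)
    next
      case False
      have "degree (Q - twisted_pderiv P) \<le> degree Q" "coeff (Q - twisted_pderiv P) (degree Q) = 0"
        using top by (simp_all add: degree_diff_le)
      with False have "degree (Q - twisted_pderiv P) < degree Q"
        by (metis le_neq_implies_less leading_coeff_0_iff)
      then show ?thesis using less that by blast
    qed
    then show ?thesis
      by (intro exI[of _ "P + P'"] exI[of _ R]) (simp add: twisted_pderiv_add algebra_simps)
  qed
qed

definition moment :: "nat \<Rightarrow> real" where
  "moment p = integral {0..} (\<lambda>r. r ^ p * exp (- \<gamma> * r ^ D))"

lemma moment_has_integral: "((\<lambda>r. r ^ p * exp (- \<gamma> * r ^ D)) has_integral moment p) {0..}"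
proof -
  obtain C where C: "\<And>r. r \<ge> 0 \<Longrightarrow> (1 + r) ^ p * exp (0 * (1 + r) ^ (D - 1) - \<gamma> * r ^ D) \<le> C * exp (- r)"
    using power_exp_V_le_exp_minus[of 0] by blast
  have "norm (r ^ p * exp (- \<gamma> * r ^ D)) \<le> C * exp (- r)" if r: "r \<ge> 0" for r
  proof -
    have "norm (r ^ p * exp (- \<gamma> * r ^ D)) \<le> (1 + r) ^ p * exp (- \<gamma> * r ^ D)"
      using r by (simp add: mult_right_mono power_mono)
    also have "\<dots> \<le> C * exp (- r)" using C[OF r] by simp
    finally show ?thesis .
  qed
  then have "(\<lambda>r. r ^ p * exp (- \<gamma> * r ^ D)) integrable_on {0..}"
    by (intro integrable_on_atLeast_0_if_exp_decay continuous_intros)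
  then show ?thesis unfolding moment_def by (rule integrable_integral)
qed

lemma moment_pos: "moment p > 0"
proof -
  have integrable: "(\<lambda>r. r ^ p * exp (- \<gamma> * r ^ D)) integrable_on {1..2}"
    by (intro integrable_continuous_interval continuous_intros)
  have "0 < integral {1..2::real} (\<lambda>_. exp (- \<gamma> * 2 ^ D))"
    by simp
  also have "\<dots> \<le> integral {1..2} (\<lambda>r. r ^ p * exp (- \<gamma> * r ^ D))"
  proof (rule integral_le)
    fix r :: real assume r: "r \<in> {1..2}"
    have "exp (- \<gamma> * 2 ^ D) \<le> exp (- \<gamma> * r ^ D)"
      using r lead_coeff_pos by (simp add: power_mono)
    moreover have "1 \<le> r ^ p" using r by simp
    ultimately show "exp (- \<gamma> * 2 ^ D) \<le> r ^ p * exp (- \<gamma> * r ^ D)"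
      using mult_mono[of 1 "r ^ p" "exp (- \<gamma> * 2 ^ D)" "exp (- \<gamma> * r ^ D)"] by simp
  qed (use integrable in \<open>intro integrable_continuous_interval continuous_intros\<close>)+
  also have "\<dots> \<le> moment p"
    unfolding moment_def using integrable moment_has_integral[of p]
    by (intro integral_subset_le) auto
  finally show ?thesis .
qed

lemma ray_integral_gauss_monomial:
  "ray_integral j (\<lambda>z. z ^ p * exp (- of_real \<gamma> * z ^ D)) = \<omega> ^ (j * (p + 1)) * of_real (moment p)"
proof -
  have "(\<omega> ^ j * of_real r) ^ p * exp (- of_real \<gamma> * (\<omega> ^ j * of_real r) ^ D)
        = \<omega> ^ (j * p) * of_real (r ^ p * exp (- \<gamma> * r ^ D))" for r
    unfolding ray_pow_D by (simp add: power_mult_distrib power_mult exp_of_real[symmetric])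
  then have "ray_integral j (\<lambda>z. z ^ p * exp (- of_real \<gamma> * z ^ D))
      = \<omega> ^ j * (\<omega> ^ (j * p) * integral {0..} (\<lambda>r. of_real (r ^ p * exp (- \<gamma> * r ^ D))))"
    unfolding ray_integral_def by (simp add: integral_mult_right)
  also have "\<dots> = \<omega> ^ (j * (p + 1)) * of_real (moment p)"
    using integral_unique[OF has_integral_of_real[where 'b = complex, OF moment_has_integral]]
    by (simp add: power_add mult.assoc)
  finally show ?thesis .
qed

(* z^p times a truncated Taylor series of e^{V - \<gamma> z^D}, so that its product with e^{-V}
   tends to z^p e^{-\<gamma> z^D}. *)

definition gauss_approx :: "nat \<Rightarrow> nat \<Rightarrow> complex poly" where
  "gauss_approx p N = monom 1 p * (\<Sum>n<N. Polynomial.smult (of_real (inverse (fact n))) (V_tail ^ n))"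

lemma poly_gauss_approx: "poly (gauss_approx p N) z = z ^ p * (\<Sum>n<N. poly V_tail z ^ n /\<^sub>R fact n)"
  unfolding gauss_approx_def by (simp add: poly_monom poly_sum scaleR_conv_of_real mult.commute)

lemma damped_gauss_approx_tendsto:
  "(\<lambda>N. damped (gauss_approx p N) z) \<longlonglongrightarrow> z ^ p * exp (- of_real \<gamma> * z ^ D)"
proof -
  have "(\<lambda>N. \<Sum>n<N. poly V_tail z ^ n /\<^sub>R fact n) \<longlonglongrightarrow> exp (poly V_tail z)"
    using exp_converges[of "poly V_tail z"] unfolding sums_def .
  then have "(\<lambda>N. damped (gauss_approx p N) z) \<longlonglongrightarrow> z ^ p * exp (poly V_tail z) * exp (- poly Vc z)"
    unfolding poly_gauss_approx by (intro tendsto_intros)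
  then show ?thesis by (simp add: poly_Vc mult.assoc exp_add[symmetric])
qed

lemma damped_gauss_approx_decay:
  obtains C where "\<And>N j r. r \<ge> 0 \<Longrightarrow> norm (damped (gauss_approx p N) (\<omega> ^ j * of_real r)) \<le> C * exp (- r)"
proof -
  obtain C where C: "\<And>r. r \<ge> 0 \<Longrightarrow>
      (1 + r) ^ p * exp ((2 * tail_bound) * (1 + r) ^ (D - 1) - \<gamma> * r ^ D) \<le> C * exp (- r)"
    using power_exp_V_le_exp_minus[of "2 * tail_bound"] tail_bound_nonneg by auto
  have "norm (damped (gauss_approx p N) (\<omega> ^ j * of_real r)) \<le> C * exp (- r)" if r: "r \<ge> 0" for N j r
  proof -
    define z where "z = \<omega> ^ j * of_real r"
    have partial: "norm (\<Sum>n<N. poly V_tail z ^ n /\<^sub>R fact n) \<le> exp (tail_bound * (1 + r) ^ (D - 1))"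
      using norm_exp_partial_sum_le[where N = N and x = "poly V_tail z"] norm_V_tail_ray[OF r, of j]
      unfolding z_def by (meson exp_le_cancel_iff order_trans)
    have "norm (damped (gauss_approx p N) z)
        = r ^ p * norm (\<Sum>n<N. poly V_tail z ^ n /\<^sub>R fact n) * norm (exp (- poly Vc z))"
      using r unfolding poly_gauss_approx z_def by (simp add: norm_mult norm_power)
    also have "\<dots> \<le> (1 + r) ^ p * exp (tail_bound * (1 + r) ^ (D - 1))
        * exp (tail_bound * (1 + r) ^ (D - 1) - \<gamma> * r ^ D)"
      using norm_exp_minus_V_ray[OF r, of j] partial r unfolding z_def
      by (intro mult_mono power_mono) auto
    also have "\<dots> = (1 + r) ^ p * exp ((2 * tail_bound) * (1 + r) ^ (D - 1) - \<gamma> * r ^ D)"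
      by (simp add: mult.assoc exp_add[symmetric] algebra_simps)
    also have "\<dots> \<le> C * exp (- r)" using C r by blast
    finally show ?thesis unfolding z_def .
  qed
  then show ?thesis using that by blast
qed

lemma ray_integral_gauss_approx_tendsto:
  "(\<lambda>N. ray_integral j (damped (gauss_approx p N)))
    \<longlonglongrightarrow> ray_integral j (\<lambda>z. z ^ p * exp (- of_real \<gamma> * z ^ D))"
proof -
  obtain C where C: "\<And>N j r. r \<ge> 0 \<Longrightarrow> norm (damped (gauss_approx p N) (\<omega> ^ j * of_real r)) \<le> C * exp (- r)"
    using damped_gauss_approx_decay by blast
  have "(\<lambda>N. integral {0..} (\<lambda>r. damped (gauss_approx p N) (\<omega> ^ j * of_real r)))
      \<longlonglongrightarrow> integral {0..} (\<lambda>r. (\<omega> ^ j * of_real r) ^ p * exp (- of_real \<gamma> * (\<omega> ^ j * of_real r) ^ D))"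
    by (rule dominated_convergence(2)[where h = "\<lambda>r. C * exp (- r)"])
      (use C damped_ray_integrable damped_gauss_approx_tendsto integrable_exp_minus_atLeast_0 in auto)
  then show ?thesis unfolding ray_integral_def by (rule tendsto_mult_left)
qed

lemma Gamma_integrals_independent:
  assumes vanish: "\<And>Q. (\<Sum>k<D - 1. c k * Gamma_integral D (Suc k) (damped Q)) = 0"
  shows "\<forall>k<D - 1. c k = 0"
proof -
  define a where "a j = (if j = 0 then (\<Sum>k<D - 1. c k) else - c (j - 1))" for j
  have D: "{..<D} = {..<Suc (D - 1)}" using D_pos by simp
  have rays: "(\<Sum>j<D. a j * ray_integral j f) = (\<Sum>k<D - 1. c k * Gamma_integral D (Suc k) f)" for f
    unfolding D sum.lessThan_Suc_shift Gamma_integral_eq_ray_integrals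
    by (simp add: a_def sum_negf right_diff_distrib sum_subtractf sum_distrib_right)
  have "(\<Sum>j<D. a j * \<omega> ^ (j * (p + 1))) = 0" for p
  proof -
    have "(\<lambda>N. \<Sum>j<D. a j * ray_integral j (damped (gauss_approx p N)))
        \<longlonglongrightarrow> (\<Sum>j<D. a j * ray_integral j (\<lambda>z. z ^ p * exp (- of_real \<gamma> * z ^ D)))"
      by (intro tendsto_sum tendsto_mult_left ray_integral_gauss_approx_tendsto)
    then have "(\<Sum>j<D. a j * ray_integral j (\<lambda>z. z ^ p * exp (- of_real \<gamma> * z ^ D))) = 0"
      unfolding rays vanish by (simp add: LIMSEQ_const_iff)
    then have "(\<Sum>j<D. a j * \<omega> ^ (j * (p + 1))) * of_real (moment p) = 0"
      unfolding ray_integral_gauss_monomial by (simp add: sum_distrib_right mult.assoc)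
    then show ?thesis using moment_pos[of p] by simp
  qed
  then have "a (Suc k) = 0" if "k < D - 1" for k
    using discrete_Fourier_injective[OF omega_primitive] that by simp
  then show ?thesis by (simp add: a_def)
qed

lemma Gamma_integrals_independent_low_degree:
  assumes vanish: "\<forall>i<D - 1. (\<Sum>k<D - 1. c k * Gamma_integral D (Suc k) (damped (monom 1 i))) = 0"
  shows "\<forall>k<D - 1. c k = 0"
proof (rule Gamma_integrals_independent)
  fix Q
  obtain P R where PR: "Q = twisted_pderiv P + R" "degree R < D - 1"
    using twisted_pderiv_division by blast
  have "(\<Sum>k<D - 1. c k * Gamma_integral D (Suc k) (damped Q))
      = (\<Sum>i<D - 1. coeff R i * (\<Sum>k<D - 1. c k * Gamma_integral D (Suc k) (damped (monom 1 i))))"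
    unfolding PR(1) Gamma_integral_damped_add_twisted_pderiv Gamma_integral_damped_expand[OF PR(2)]
      sum_distrib_left
    by (subst sum.swap) (auto intro!: sum.cong simp: mult_ac)
  then show "(\<Sum>k<D - 1. c k * Gamma_integral D (Suc k) (damped Q)) = 0"
    using vanish by simp
qed

lemma low_degree_eq_0_if_Gamma_integrals_vanish:
  assumes R: "degree R < D - 1" and vanish: "\<forall>k\<in>{1..D - 1}. Gamma_integral D k (damped R) = 0"
  shows "R = 0"
proof -
  have "\<forall>i<D - 1. coeff R i = 0"
  proof (rule matrix_kernel_trivial_if_transpose_kernel_trivial
      [where F = "\<lambda>k i. Gamma_integral D (Suc k) (damped (monom 1 i))"])
    show "\<forall>k<D - 1. (\<Sum>i<D - 1. Gamma_integral D (Suc k) (damped (monom 1 i)) * coeff R i) = 0"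
      using vanish Gamma_integral_damped_expand[OF R] by (simp add: mult.commute)
  qed (rule Gamma_integrals_independent_low_degree)
  then show ?thesis
    using R by (intro poly_eqI) (metis coeff_0 coeff_eq_0 leI le_less_trans)
qed

lemma range_twisted_pderiv_iff:
  "(\<exists>P. Q = twisted_pderiv P) \<longleftrightarrow> (\<forall>k\<in>{1..D - 1}. Gamma_integral D k (damped Q) = 0)"
proof
  assume "\<exists>P. Q = twisted_pderiv P"
  then show "\<forall>k\<in>{1..D - 1}. Gamma_integral D k (damped Q) = 0"
    using Gamma_integral_damped_twisted_pderiv by auto
next
  assume vanish: "\<forall>k\<in>{1..D - 1}. Gamma_integral D k (damped Q) = 0"
  obtain P R where PR: "Q = twisted_pderiv P + R" "degree R < D - 1"
    using twisted_pderiv_division by blast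
  have "\<forall>k\<in>{1..D - 1}. Gamma_integral D k (damped R) = 0"
    using vanish unfolding PR(1) Gamma_integral_damped_add_twisted_pderiv .
  with PR(2) have "R = 0"
    by (rule low_degree_eq_0_if_Gamma_integrals_vanish)
  with PR show "\<exists>P. Q = twisted_pderiv P" by auto
qed

end

theorem mainTheorem2:
  fixes V :: "real poly" and Q :: "complex poly"
  assumes "even (degree V)" and "degree V \<ge> 2" and "lead_coeff V > 0"
  shows "((\<exists>P :: complex poly. \<forall>x :: complex.
            poly Q x = exp (poly (map_poly complex_of_real V) x) *
              deriv (\<lambda>z. exp (- poly (map_poly complex_of_real V) z) * poly P z) x)
         \<longleftrightarrow> (\<forall>k \<in> {1..degree V - 1}.
              Gamma_integral (degree V) k
                (\<lambda>z. poly Q z * exp (- poly (map_poly complex_of_real V) z)) = 0))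
       \<and> (\<forall>P1 P2 :: complex poly.
            (\<forall>x :: complex. poly Q x = exp (poly (map_poly complex_of_real V) x) *
               deriv (\<lambda>z. exp (- poly (map_poly complex_of_real V) z) * poly P1 z) x)
          \<and> (\<forall>x :: complex. poly Q x = exp (poly (map_poly complex_of_real V) x) *
               deriv (\<lambda>z. exp (- poly (map_poly complex_of_real V) z) * poly P2 z) x)
          \<longrightarrow> P1 = P2)"
proof -
  interpret potential V
    using assms(2,3) by unfold_locales
  show ?thesis
    unfolding twisted_pderiv_iff using range_twisted_pderiv_iff twisted_pderiv_inj by blast
qed

end
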